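(* Let $P^*$ and $\widehat P$ be transition kernels and $\pi_b,\pi$ policies satisfying the standing assumptions, and let $\mathcal G$ be any class of functions $g:\mathbb S\times\mathbb A\to\mathbb R$ with $\sup_{g\in\mathcal G}\|g\|_\infty<\infty$. Define $$\mathcal F:=\Big\{Q_g^{\pi,\widehat P}\;:\;g\in\mathcal G\Big\},$$ i.e. $f\in\mathcal F$ iff $f(s,a)=\mathbb E_{\pi,\widehat P}\big[\sum_{t=0}^\infty (g(s_t,a_t)-\hat\eta^\pi_g)\mid s_0=s,a_0=a\big]$ with $\hat\eta^\pi_g=\lim_{T\to\infty}\mathbb E_{\pi,\widehat P}\big[\frac1{T+1}\sum_{t=0}^T g(s_t,a_t)\big]$ for some $g\in\mathcal G$. Then $$D_{\mathcal G}\big(d_{\pi_b}^{P^*},d_{\pi}^{\widehat P}\big)=\mathcal R_{\mathcal F}(d_{\pi_b}^{P^*},\pi,\widehat P):=\sup_{f\in\mathcal F}\Big|\mathbb E_{(s,a)\sim d_{\pi_b}^{P^*}}[f(s,a)]-\mathbb E_{(s,a)\sim d_{\pi_b}^{P^*},\,s'\sim\widehat P(\cdot\mid s,a),\,a'\sim\pi(\cdot\mid s')}[f(s',a')]\Big|.$$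
   Context: Standing setting: finite state space $\mathbb S$ and finite action space $\mathbb A$. A transition kernel $P$ gives probabilities $P(s'\mid s,a)$; a (time-stationary Markov) policy $\pi$ gives probabilities $\pi(a\mid s)$. Standing assumption: for every kernel $P\in\{P^*,\widehat P\}$ and policy $\pi$ considered, the Markov chain on $\mathbb S\times\mathbb A$ with transitions $(s,a)\mapsto(s',a')$, $s'\sim P(\cdot\mid s,a)$, $a'\sim\pi(\cdot\mid s')$, is irreducible and aperiodic. Its unique stationary distribution is denoted $d_\pi^P(s,a)$ (so $d_\pi^P(s,a)=d_\pi^P(s)\pi(a\mid s)$ and $d^P_\pi(s',a')=\sum_{s,a}\pi(a'\mid s')P(s'\mid s,a)d^P_\pi(s,a)$). $P^*$ is the true dynamics, $\widehat P$ an estimated dynamics, $\pi_b$ the behavior policy. For a bounded "reward" $g:\mathbb S\times\mathbb A\to\mathbb R$, the average reward is $\eta^{\pi,P}_g=\mathbb E_{d_\pi^P}[g]=\lim_{T\to\infty}\mathbb E_{\pi,P}[\frac1{T+1}\sum_{t=0}^T g(s_t,a_t)]$, and the differential value function is $Q_g^{\pi,P}(s,a)=\mathbb E_{\pi,P}\big[\sum_{t=0}^\infty (g(s_t,a_t)-\eta^{\pi,P}_g)\mid s_0=s,a_0=a\big]$ (the series converges under the standing assumption), where $\mathbb E_{\pi,P}$ is over trajectories with $s_{t+1}\sim P(\cdot\mid s_t,a_t)$, $a_{t+1}\sim\pi(\cdot\mid s_{t+1})$. For a function class $\mathcal G$ and distributions $\mu,\nu$ on $\mathbb S\times\mathbb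 A$, the integral probability metric is $D_{\mathcal G}(\mu,\nu):=\sup_{g\in\mathcal G}\big|\mathbb E_{\mu}[g]-\mathbb E_{\nu}[g]\big|$. *)

theory Defs
  imports "HOL-Analysis.Analysis"
begin

text \<open>Finite state type 's, finite action type 'a.
  A kernel P gives P s a s' = P(s' | s,a); a policy pol gives pol s a = pi(a | s).\<close>

definition kernel :: "('s::finite \<Rightarrow> 'a::finite \<Rightarrow> 's \<Rightarrow> real) \<Rightarrow> bool" where
  "kernel P \<longleftrightarrow> (\<forall>s a s'. P s a s' \<ge> 0) \<and> (\<forall>s a. (\<Sum>s'\<in>UNIV. P s a s') = 1)"

definition policy :: "('s::finite \<Rightarrow> 'a::finite \<Rightarrow> real) \<Rightarrow> bool" where
  "policy pol \<longleftrightarrow> (\<forall>s a. pol s a \<ge> 0) \<and> (\<forall>s. (\<Sum>a\<in>UNIV. pol s a) = 1)"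

definition sa_trans ::
  "('s::finite \<Rightarrow> 'a::finite \<Rightarrow> 's \<Rightarrow> real) \<Rightarrow> ('s \<Rightarrow> 'a \<Rightarrow> real)
   \<Rightarrow> ('s \<times> 'a) \<Rightarrow> ('s \<times> 'a) \<Rightarrow> real" where
  "sa_trans P pol x y = P (fst x) (snd x) (fst y) * pol (fst y) (snd y)"

fun mstep :: "('x::finite \<Rightarrow> 'x \<Rightarrow> real) \<Rightarrow> nat \<Rightarrow> 'x \<Rightarrow> 'x \<Rightarrow> real" where
  "mstep M 0 x y = (if x = y then 1 else 0)"
| "mstep M (Suc n) x y = (\<Sum>z\<in>UNIV. mstep M n x z * M z y)"

definition irreducible :: "('x::finite \<Rightarrow> 'x \<Rightarrow> real) \<Rightarrow> bool" where
  "irreducible M \<longleftrightarrow> (\<forall>x y. \<exists>n>0. mstep M n x y > 0)"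

definition aperiodic :: "('x::finite \<Rightarrow> 'x \<Rightarrow> real) \<Rightarrow> bool" where
  "aperiodic M \<longleftrightarrow> (\<forall>x. Gcd {n. n > 0 \<and> mstep M n x x > 0} = (1::nat))"

definition standing :: "('s::finite \<Rightarrow> 'a::finite \<Rightarrow> 's \<Rightarrow> real) \<Rightarrow> ('s \<Rightarrow> 'a \<Rightarrow> real) \<Rightarrow> bool" where
  "standing P pol \<longleftrightarrow> irreducible (sa_trans P pol) \<and> aperiodic (sa_trans P pol)"

text \<open>Stationary distribution d_pi^P on S x A (unique under the standing assumption).\<close>
definition stat_dist ::
  "('s::finite \<Rightarrow> 'a::finite \<Rightarrow> 's \<Rightarrow> real) \<Rightarrow> ('s \<Rightarrow> 'a \<Rightarrow> real) \<Rightarrow> ('s \<times> 'a) \<Rightarrow> real" where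
  "stat_dist P pol = (THE d. (\<forall>x. d x \<ge> 0) \<and> (\<Sum>x\<in>UNIV. d x) = 1 \<and>
      (\<forall>y. d y = (\<Sum>x\<in>UNIV. d x * sa_trans P pol x y)))"

definition expect :: "(('s::finite \<times> 'a::finite) \<Rightarrow> real) \<Rightarrow> ('s \<times> 'a \<Rightarrow> real) \<Rightarrow> real" where
  "expect d g = (\<Sum>x\<in>UNIV. d x * g x)"

definition avg_reward ::
  "('s::finite \<Rightarrow> 'a::finite \<Rightarrow> 's \<Rightarrow> real) \<Rightarrow> ('s \<Rightarrow> 'a \<Rightarrow> real) \<Rightarrow> ('s \<times> 'a \<Rightarrow> real) \<Rightarrow> real" where
  "avg_reward P pol g = expect (stat_dist P pol) g"

definition diff_Q ::
  "('s::finite \<Rightarrow> 'a::finite \<Rightarrow> 's \<Rightarrow> real) \<Rightarrow> ('s \<Rightarrow> 'a \<Rightarrow> real) \<Rightarrow> ('s \<times> 'a \<Rightarrow> real)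
   \<Rightarrow> ('s \<times> 'a) \<Rightarrow> real" where
  "diff_Q P pol g x = (\<Sum>t. (\<Sum>y\<in>UNIV. mstep (sa_trans P pol) t x y * g y) - avg_reward P pol g)"

definition IPM :: "('s::finite \<times> 'a::finite \<Rightarrow> real) set \<Rightarrow> ('s \<times> 'a \<Rightarrow> real) \<Rightarrow> ('s \<times> 'a \<Rightarrow> real) \<Rightarrow> real" where
  "IPM G mu nu = (SUP g\<in>G. \<bar>expect mu g - expect nu g\<bar>)"

definition bellman_R ::
  "('s::finite \<times> 'a::finite \<Rightarrow> real) set \<Rightarrow> ('s \<times> 'a \<Rightarrow> real) \<Rightarrow> ('s \<Rightarrow> 'a \<Rightarrow> real)
   \<Rightarrow> ('s \<Rightarrow> 'a \<Rightarrow> 's \<Rightarrow> real) \<Rightarrow> real" where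
  "bellman_R F mu pol P = (SUP f\<in>F. \<bar>expect mu f -
      (\<Sum>x\<in>UNIV. mu x * (\<Sum>s'\<in>UNIV. P (fst x) (snd x) s' * (\<Sum>a'\<in>UNIV. pol s' a' * f (s', a'))))\<bar>)"

end

theory Submission
  imports Defs
begin

text \<open>Let M be the state-action transition matrix of the estimated model under \<pi>, \<eta> the
  average reward of g and Q its differential value function. Q solves the Poisson equation
  Q = g - \<eta> + M Q, so for every probability distribution \<mu> the Bellman residual
  E_\<mu>[Q] - E_\<mu>[M Q] equals E_\<mu>[g] - \<eta>; taking \<mu> = d_\<pi>_b, the two suprema agree term by term.

  The work lies in the Poisson equation. The return times of an aperiodic chain to a state form an
  additive semigroup of gcd 1, which contains all large integers; together with irreducibility this
  gives a power of M with all entries positive. Doeblin's argument then contracts the oscillation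
  of M^t g geometrically, so M^t g converges to \<eta> exponentially fast, the series defining Q
  converges, and the limit distribution is the unique stationary one, i.e. the one denoted by
  stat_dist.\<close>

section \<open>Additive semigroups of natural numbers\<close>

lemma add_closed_mult_mem:
  fixes S :: "nat set"
  assumes "\<And>a b. a \<in> S \<Longrightarrow> b \<in> S \<Longrightarrow> a + b \<in> S" and "x \<in> insert 0 S"
  shows "k * x \<in> insert 0 S"
  using assms by (induction k) auto

lemma add_closed_Gcd_one_consecutive:
  fixes S :: "nat set"
  assumes add: "\<And>a b. a \<in> S \<Longrightarrow> b \<in> S \<Longrightarrow> a + b \<in> S" and Gcd: "Gcd S = 1"
  obtains B where "B \<in> insert 0 S" "Suc B \<in> S"
proof -
  define S' where "S' = insert 0 S"
  have mult_mem: "k * x \<in> S'" if "x \<in> S'" for k x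
    using add_closed_mult_mem[of S x k] add that by (simp add: S'_def)
  have add_mem: "x + y \<in> S'" if "x \<in> S'" "y \<in> S'" for x y
    using add that by (auto simp: S'_def)
  define D where "D = {d::nat. d > 0 \<and> (\<exists>A\<in>S'. \<exists>B\<in>S'. int d = int A - int B)}"
  obtain s where s: "s \<in> S" "s \<noteq> 0"
    using Gcd Gcd_0_iff[of S] by auto
  then have "s \<in> D" by (force simp: D_def S'_def)
  define d where "d = (LEAST d. d \<in> D)"
  have "d \<in> D" unfolding d_def by (rule LeastI) fact
  then obtain A B where AB: "A \<in> S'" "B \<in> S'" "int d = int A - int B" "d > 0"
    by (auto simp: D_def)
  \<comment> \<open>the remainder of an element of S modulo the least positive difference d is again a difference\<close>
  have "d dvd x" if "x \<in> S" for x
  proof -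
    define q r where "q = x div d" and "r = x mod d"
    have "A = B + d" using AB(3) by linarith
    then have "x + q * B = q * A + r" by (simp add: q_def r_def algebra_simps)
    then have "int r = int (x + q * B) - int (q * A)" by simp
    moreover have "x + q * B \<in> S'"
      using that AB(2) by (intro add_mem mult_mem) (simp_all add: S'_def)
    ultimately have "r = 0 \<or> r \<in> D"
      using mult_mem[OF AB(1), of q] unfolding D_def mem_Collect_eq by (metis neq0_conv)
    moreover have "r < d" using AB(4) by (simp add: r_def)
    ultimately have "r = 0" unfolding d_def using not_less_Least by blast
    then show ?thesis by (simp add: r_def mod_eq_0_iff_dvd)
  qed
  then have "d = 1" using Gcd by (metis Gcd_greatest nat_dvd_1_iff_1)
  then have "A = Suc B" using AB(3) by simp
  then show ?thesis using that AB(1,2) by (auto simp: S'_def)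
qed

lemma add_closed_consecutive_large_mem:
  fixes S :: "nat set"
  assumes add: "\<And>a b. a \<in> S \<Longrightarrow> b \<in> S \<Longrightarrow> a + b \<in> S"
    and B: "B \<in> insert 0 S" and SucB: "Suc B \<in> S"
  shows "\<exists>n0. \<forall>n\<ge>n0. n \<in> S"
proof (intro exI allI impI)
  fix n assume n: "B * B + 1 \<le> n"
  define S' where "S' = insert 0 S"
  have mult_mem: "k * x \<in> S'" if "x \<in> S'" for k x
    using add_closed_mult_mem[of S x k] add that by (simp add: S'_def)
  have add_mem: "x + y \<in> S'" if "x \<in> S'" "y \<in> S'" for x y
    using add that by (auto simp: S'_def)
  define q r where "q = n div B" and "r = n mod B"
  have "r \<le> q \<or> B = 0"
  proof (cases "B = 0")
    case False
    then have "B \<le> q" using n unfolding q_def by (metis div_le_mono nonzero_mult_div_cancel_right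
          add_leD1)
    then show ?thesis using False by (simp add: r_def le_trans[OF less_imp_le[OF mod_less_divisor]])
  qed simp
  \<comment> \<open>for B = 0 this holds because n div 0 = 0 and n mod 0 = n\<close>
  then have "n = (q - r) * B + r * Suc B"
    by (auto simp: q_def r_def diff_mult_distrib algebra_simps)
  moreover have "(q - r) * B + r * Suc B \<in> S'"
    using B SucB by (intro add_mem mult_mem) (simp_all add: S'_def)
  ultimately show "n \<in> S" using n by (auto simp: S'_def)
qed

section \<open>Stochastic matrices and their powers\<close>

definition stochastic :: "('x::finite \<Rightarrow> 'x \<Rightarrow> real) \<Rightarrow> bool" where
  "stochastic M \<longleftrightarrow> (\<forall>x y. M x y \<ge> 0) \<and> (\<forall>x. (\<Sum>y\<in>UNIV. M x y) = 1)"

definition mat_vec :: "('x::finite \<Rightarrow> 'x \<Rightarrow> real) \<Rightarrow> ('x \<Rightarrow> real) \<Rightarrow> 'x \<Rightarrow> real" where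
  "mat_vec K h x = (\<Sum>y\<in>UNIV. K x y * h y)"

lemma sum_mat_mult_assoc:
  fixes a :: "'z \<Rightarrow> real"
  shows "(\<Sum>w\<in>A. (\<Sum>z\<in>B. a z * b z w) * c w) = (\<Sum>z\<in>B. a z * (\<Sum>w\<in>A. b z w * c w))"
  by (simp add: sum_distrib_left sum_distrib_right mult.assoc sum.swap[of _ A])

lemma mstep_nonneg: "stochastic M \<Longrightarrow> mstep M n x y \<ge> 0"
  by (induction n arbitrary: y) (auto simp: stochastic_def intro!: sum_nonneg)

lemma mstep_sum: "stochastic M \<Longrightarrow> (\<Sum>y\<in>UNIV. mstep M n x y) = 1"
proof (induction n)
  case (Suc n)
  have "(\<Sum>y\<in>UNIV. mstep M (Suc n) x y) = (\<Sum>y\<in>UNIV. (\<Sum>z\<in>UNIV. mstep M n x z * M z y) * 1)"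
    by simp
  also have "\<dots> = (\<Sum>z\<in>UNIV. mstep M n x z * (\<Sum>y\<in>UNIV. M z y * 1))"
    by (rule sum_mat_mult_assoc)
  also have "\<dots> = 1" using Suc by (simp add: stochastic_def)
  finally show ?case .
qed simp

lemma stochastic_mstep: "stochastic M \<Longrightarrow> stochastic (mstep M n)"
  using mstep_nonneg mstep_sum unfolding stochastic_def by blast

lemma mstep_le_1: "stochastic M \<Longrightarrow> mstep M n x y \<le> 1"
  using member_le_sum[of y UNIV "mstep M n x"] mstep_nonneg mstep_sum by fastforce

lemma mstep_add: "mstep M (m + n) x y = (\<Sum>z\<in>UNIV. mstep M m x z * mstep M n z y)"
proof (induction n arbitrary: y)
  case 0
  show ?case by (simp add: if_distrib[of "(*) _"] cong: if_cong)
next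
  case (Suc n)
  then show ?case by (simp add: sum_mat_mult_assoc)
qed

lemma mstep_1: "mstep M 1 x y = M x y"
  by (simp add: if_distrib[of "\<lambda>u. u * _"] cong: if_cong)

lemma mstep_add_ge: "stochastic M \<Longrightarrow> mstep M (m + n) x y \<ge> mstep M m x z * mstep M n z y"
  unfolding mstep_add
  by (rule member_le_sum[where f="\<lambda>z. mstep M m x z * mstep M n z y"]) (auto intro: mult_nonneg_nonneg mstep_nonneg)

lemma mat_vec_mstep_0: "mat_vec (mstep M 0) h x = h x"
  by (simp add: mat_vec_def if_distrib[of "\<lambda>u. u * _"] cong: if_cong)

lemma mat_vec_mstep_add: "mat_vec (mstep M (m + n)) h x = mat_vec (mstep M m) (mat_vec (mstep M n) h) x"
  unfolding mat_vec_def mstep_add by (rule sum_mat_mult_assoc)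

lemma mat_vec_mstep_Suc: "mat_vec (mstep M (Suc n)) h x = mat_vec M (mat_vec (mstep M n) h) x"
proof -
  have "mat_vec (mstep M (Suc n)) h x = mat_vec (mstep M 1) (mat_vec (mstep M n) h) x"
    using mat_vec_mstep_add[of M 1 n] by simp
  then show ?thesis by (simp only: mat_vec_def mstep_1)
qed

section \<open>Geometric ergodicity\<close>

lemma positive_power_if_irreducible_aperiodic:
  assumes M: "stochastic M" and irr: "irreducible M" and ap: "aperiodic M"
  obtains N where "N > 0" "\<And>x y. mstep M N x y > 0"
proof -
  have "\<exists>n0. \<forall>n\<ge>n0. mstep M n x x > 0" for x
  proof -
    define S where "S = {n. n > 0 \<and> mstep M n x x > 0}"
    have add: "a + b \<in> S" if "a \<in> S" "b \<in> S" for a b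
    proof -
      have "0 < mstep M a x x * mstep M b x x" using that by (simp add: S_def)
      also have "\<dots> \<le> mstep M (a + b) x x" by (rule mstep_add_ge[OF M])
      finally show ?thesis using that by (simp add: S_def)
    qed
    have "Gcd S = 1" using ap by (simp add: aperiodic_def S_def)
    then obtain B where "B \<in> insert 0 S" "Suc B \<in> S"
      using add_closed_Gcd_one_consecutive[OF add] by blast
    then have "\<exists>n0. \<forall>n\<ge>n0. n \<in> S"
      using add_closed_consecutive_large_mem[of S B] add by blast
    then show ?thesis by (auto simp: S_def)
  qed
  then obtain n0 where n0: "\<And>x n. n \<ge> n0 x \<Longrightarrow> mstep M n x x > 0"
    using choice[of "\<lambda>x n0. \<forall>n\<ge>n0. mstep M n x x > 0"] by blast
  define m where "m x y = (SOME n. mstep M n x y > 0)" for x y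
  have m: "mstep M (m x y) x y > 0" for x y
  proof -
    have "\<exists>n. mstep M n x y > 0" using irr unfolding irreducible_def by blast
    then show ?thesis unfolding m_def by (rule someI_ex)
  qed
  define N where "N = Max (range (\<lambda>(x, y). n0 x + m x y)) + 1"
  have N: "n0 x + m x y < N" for x y
  proof -
    have "(\<lambda>(x, y). n0 x + m x y) (x, y) \<le> Max (range (\<lambda>(x, y). n0 x + m x y))"
      by (rule Max_ge) auto
    then show ?thesis by (simp add: N_def)
  qed
  show ?thesis
  proof
    show "N > 0" by (simp add: N_def)
  next
    fix x y
    have "0 < mstep M (N - m x y) x x * mstep M (m x y) x y"
      using n0[of x "N - m x y"] m[of x y] N[of x y] by simp
    also have "\<dots> \<le> mstep M N x y"
      using mstep_add_ge[OF M, where m="N - m x y" and n="m x y" and x=x and y=y and z=x] N[of x y] by simp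
    finally show "mstep M N x y > 0" .
  qed
qed

definition osc :: "('x::finite \<Rightarrow> real) \<Rightarrow> real" where
  "osc h = Max (range h) - Min (range h)"

lemma osc_nonneg: "0 \<le> osc h"
  using Min_le[of "range h" "h undefined"] Max_ge[of "range h" "h undefined"]
  by (simp add: osc_def)

lemma mat_vec_le_Max_minus_osc:
  assumes K: "stochastic K" and \<delta>: "\<And>x y. \<delta> \<le> K x y"
  shows "mat_vec K h x \<le> Max (range h) - \<delta> * osc h"
proof -
  have "Min (range h) \<in> range h" by (rule Min_in) auto
  then obtain y0 where y0: "h y0 = Min (range h)" by (metis rangeE)
  have "\<delta> * osc h \<le> K x y0 * (Max (range h) - h y0)"
    unfolding y0 osc_def using \<delta> osc_nonneg[of h] by (intro mult_right_mono) (auto simp: osc_def)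
  also have "\<dots> \<le> (\<Sum>y\<in>UNIV. K x y * (Max (range h) - h y))"
    using K by (intro member_le_sum[where f="\<lambda>y. K x y * (Max (range h) - h y)"])
      (auto simp: stochastic_def)
  also have "\<dots> = Max (range h) - mat_vec K h x"
    using K by (simp add: mat_vec_def stochastic_def right_diff_distrib sum_subtractf
        flip: sum_distrib_right)
  finally show ?thesis by simp
qed

lemma mat_vec_ge_Min_plus_osc:
  assumes K: "stochastic K" and \<delta>: "\<And>x y. \<delta> \<le> K x y"
  shows "mat_vec K h x \<ge> Min (range h) + \<delta> * osc h"
proof -
  have Max: "Max (range (\<lambda>y. - h y)) = - Min (range h)"
    using minus_Min_eq_Max[of "range h"] by (simp add: image_image)
  moreover have "Min (range (\<lambda>y. - h y)) = - Max (range h)"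
    using minus_Max_eq_Min[of "range h"] by (simp add: image_image)
  ultimately have osc: "osc (\<lambda>y. - h y) = osc h" unfolding osc_def by linarith
  have "mat_vec K (\<lambda>y. - h y) x = - mat_vec K h x"
    by (simp add: mat_vec_def sum_negf)
  then show ?thesis
    using mat_vec_le_Max_minus_osc[OF K \<delta>, of "\<lambda>y. - h y" x, unfolded osc Max] by linarith
qed

lemma Max_mat_vec_le: "stochastic K \<Longrightarrow> Max (range (mat_vec K h)) \<le> Max (range h)"
  using mat_vec_le_Max_minus_osc[of K 0] by (simp add: stochastic_def)

lemma Min_mat_vec_ge: "stochastic K \<Longrightarrow> Min (range (mat_vec K h)) \<ge> Min (range h)"
  using mat_vec_ge_Min_plus_osc[of K 0] by (simp add: stochastic_def)

lemma osc_mat_vec_le: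
  assumes "stochastic K" and "\<And>x y. \<delta> \<le> K x y"
  shows "osc (mat_vec K h) \<le> (1 - 2 * \<delta>) * osc h"
proof -
  have "Max (range (mat_vec K h)) \<le> Max (range h) - \<delta> * osc h"
    using mat_vec_le_Max_minus_osc[OF assms] by simp
  moreover have "Min (range (mat_vec K h)) \<ge> Min (range h) + \<delta> * osc h"
    using mat_vec_ge_Min_plus_osc[OF assms] by simp
  ultimately have "osc (mat_vec K h) \<le> osc h - 2 * (\<delta> * osc h)"
    using osc_def[of h] unfolding osc_def[of "mat_vec K h"] by linarith
  then show ?thesis by (simp add: algebra_simps)
qed

lemma mat_vec_mstep_limit_within_osc:
  assumes M: "stochastic M"
  obtains L where "\<And>t x. \<bar>mat_vec (mstep M t) h x - L\<bar> \<le> osc (mat_vec (mstep M t) h)"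
proof -
  define v where "v t = mat_vec (mstep M t) h" for t
  define mx where "mx t = Max (range (v t))" for t
  define mn where "mn t = Min (range (v t))" for t
  have v_Suc: "v (Suc t) = mat_vec M (v t)" for t
    by (simp add: v_def mat_vec_mstep_Suc fun_eq_iff)
  have "decseq mx"
    unfolding decseq_Suc_iff mx_def v_Suc using Max_mat_vec_le[OF M] by blast
  moreover have "incseq mn"
    unfolding incseq_Suc_iff mn_def v_Suc using Min_mat_vec_ge[OF M] by blast
  moreover have mn_le_mx: "mn t \<le> mx t" for t
    using Min_le[of "range (v t)" "v t undefined"] Max_ge[of "range (v t)" "v t undefined"]
    by (simp add: mn_def mx_def)
  ultimately have "\<forall>i. mn 0 \<le> mx i"
    by (meson incseq_def order_trans zero_le)
  then obtain L where L: "mx \<longlonglongrightarrow> L" "\<And>i. L \<le> mx i"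
    using decseq_convergent[OF \<open>decseq mx\<close>] by blast
  have mn_le_L: "mn t \<le> L" for t
  proof (rule LIMSEQ_le_const[OF L(1)], intro exI allI impI)
    fix n assume "t \<le> n"
    then show "mn t \<le> mx n" using \<open>incseq mn\<close> mn_le_mx by (meson incseq_def order_trans)
  qed
  have mn_le_v: "mn t \<le> v t x" and v_le_mx: "v t x \<le> mx t" for t x
    by (simp_all add: mn_def mx_def)
  have "\<bar>v t x - L\<bar> \<le> mx t - mn t" for t x
    using L(2)[of t] mn_le_L[of t] mn_le_v[of t x] v_le_mx[of t x] by (simp add: abs_le_iff)
  then show ?thesis by (intro that) (simp add: v_def mx_def mn_def osc_def)
qed

lemma osc_mat_vec_mstep_le:
  assumes M: "stochastic M" and N: "N > 0"
    and \<delta>: "0 \<le> \<delta>" "\<And>x y. \<delta> \<le> mstep M N x y"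
  shows "osc (mat_vec (mstep M t) h) \<le> (1 - \<delta>) ^ (t div N) * osc h"
proof (induction t rule: less_induct)
  case (less t)
  show ?case
  proof (cases "t < N")
    case True
    have "osc (mat_vec (mstep M t) h) \<le> osc h"
      using Max_mat_vec_le[OF stochastic_mstep[OF M, of t], of h]
        Min_mat_vec_ge[OF stochastic_mstep[OF M, of t], of h]
      unfolding osc_def by linarith
    then show ?thesis using True by simp
  next
    case False
    have \<delta>1: "\<delta> \<le> 1" using \<delta>(2) mstep_le_1[OF M] order_trans by blast
    have "mat_vec (mstep M t) h = mat_vec (mstep M N) (mat_vec (mstep M (t - N)) h)"
      using mat_vec_mstep_add[of M N "t - N"] False by (intro ext) simp
    then have "osc (mat_vec (mstep M t) h) = osc (mat_vec (mstep M N) (mat_vec (mstep M (t - N)) h))"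
      by simp
    also have "\<dots> \<le> (1 - 2 * \<delta>) * osc (mat_vec (mstep M (t - N)) h)"
      by (rule osc_mat_vec_le[OF stochastic_mstep[OF M] \<delta>(2)])
    also have "\<dots> \<le> (1 - \<delta>) * osc (mat_vec (mstep M (t - N)) h)"
      using \<delta>(1) osc_nonneg by (intro mult_right_mono) auto
    also have "\<dots> \<le> (1 - \<delta>) * ((1 - \<delta>) ^ ((t - N) div N) * osc h)"
      using less[of "t - N"] False N \<delta>1 by (intro mult_left_mono) auto
    also have "\<dots> = (1 - \<delta>) ^ (t div N) * osc h"
      using False N by (simp add: le_div_geq)
    finally show ?thesis .
  qed
qed

lemma geometric_ergodicity:
  assumes M: "stochastic M" and "irreducible M" and "aperiodic M"
  obtains r L C where "0 \<le> r" "r < 1"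
    "\<And>h t x. \<bar>mat_vec (mstep M t) h x - L h\<bar> \<le> C h * r ^ t"
proof -
  obtain N where N: "N > 0" "\<And>x y. mstep M N x y > 0"
    using positive_power_if_irreducible_aperiodic assms by blast
  \<comment> \<open>halving keeps the contraction factor 1 - \<delta> strictly positive, so that its N-th root exists\<close>
  define \<delta> where "\<delta> = Min (range (\<lambda>(x, y). mstep M N x y)) / 2"
  have Min_le_mstep: "2 * \<delta> \<le> mstep M N x y" for x y
  proof -
    have "Min (range (\<lambda>(x, y). mstep M N x y)) \<le> mstep M N x y"
      by (rule Min_le) (auto intro: image_eqI[where x="(x, y)"])
    then show ?thesis by (simp add: \<delta>_def)
  qed
  have "\<delta> > 0" using N(2) by (simp add: \<delta>_def)
  then have \<delta>_le: "\<delta> \<le> mstep M N x y" for x y using Min_le_mstep[of x y] by simp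
  have "2 * \<delta> \<le> 1" using Min_le_mstep mstep_le_1[OF M] order_trans by blast
  define r where "r = root N (1 - \<delta>)"
  have r: "0 < r" "r < 1" "r ^ N = 1 - \<delta>"
    using \<open>\<delta> > 0\<close> \<open>2 * \<delta> \<le> 1\<close> N(1) by (auto simp: r_def real_root_lt_1_iff real_root_pow_pos2)
  have power_div_le: "(1 - \<delta>) ^ (t div N) \<le> r ^ t / r ^ N" for t
  proof -
    have "(1 - \<delta>) ^ (t div N) * r ^ N \<le> (1 - \<delta>) ^ (t div N) * r ^ (t mod N)"
      using r \<open>2 * \<delta> \<le> 1\<close> N(1) by (intro mult_left_mono power_decreasing) auto
    also have "\<dots> = r ^ t"
      by (metis r(3) div_mult_mod_eq power_add power_mult mult.commute)
    finally show ?thesis using r(1) by (simp add: pos_le_divide_eq)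
  qed
  have "\<exists>L C. \<forall>t x. \<bar>mat_vec (mstep M t) h x - L\<bar> \<le> C * r ^ t" for h
  proof -
    obtain L where L: "\<And>t x. \<bar>mat_vec (mstep M t) h x - L\<bar> \<le> osc (mat_vec (mstep M t) h)"
      using mat_vec_mstep_limit_within_osc[OF M] by blast
    have "\<bar>mat_vec (mstep M t) h x - L\<bar> \<le> osc h / r ^ N * r ^ t" for t x
    proof -
      have "osc (mat_vec (mstep M t) h) \<le> (1 - \<delta>) ^ (t div N) * osc h"
        using osc_mat_vec_mstep_le[OF M N(1)] \<open>\<delta> > 0\<close> \<delta>_le by simp
      also have "\<dots> \<le> r ^ t / r ^ N * osc h"
        by (intro mult_right_mono power_div_le osc_nonneg)
      finally show ?thesis using L[of t x] by (simp add: ac_simps)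
    qed
    then show ?thesis by blast
  qed
  then obtain L C where "\<And>h t x. \<bar>mat_vec (mstep M t) h x - L h\<bar> \<le> C h * r ^ t"
    by metis
  with r show ?thesis by (intro that) auto
qed

section \<open>Stationary distributions\<close>

definition stationary :: "('x::finite \<Rightarrow> 'x \<Rightarrow> real) \<Rightarrow> ('x \<Rightarrow> real) \<Rightarrow> bool" where
  "stationary M d \<longleftrightarrow>
     (\<forall>x. d x \<ge> 0) \<and> (\<Sum>x\<in>UNIV. d x) = 1 \<and> (\<forall>y. d y = (\<Sum>x\<in>UNIV. d x * M x y))"

lemma stationary_mstep:
  assumes "stationary M d"
  shows "(\<Sum>x\<in>UNIV. d x * mstep M t x y) = d y"
proof (induction t arbitrary: y)
  case 0
  show ?case by (simp add: if_distrib[of "(*) _"] cong: if_cong)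
next
  case (Suc t)
  have "(\<Sum>x\<in>UNIV. d x * mstep M (Suc t) x y) = (\<Sum>z\<in>UNIV. (\<Sum>x\<in>UNIV. d x * mstep M t x z) * M z y)"
    unfolding mstep.simps by (rule sum_mat_mult_assoc[symmetric])
  also have "\<dots> = (\<Sum>z\<in>UNIV. d z * M z y)" by (simp only: Suc.IH)
  also have "\<dots> = d y" using assms unfolding stationary_def by metis
  finally show ?case .
qed

lemma stationary_if_mstep_tendsto:
  assumes M: "stochastic M" and lim: "\<And>y. (\<lambda>t. mstep M t x y) \<longlonglongrightarrow> d y"
  shows "stationary M d"
  unfolding stationary_def
proof (intro conjI allI)
  show "d y \<ge> 0" for y
    using lim by (rule LIMSEQ_le_const) (auto intro: mstep_nonneg[OF M])
  have "(\<lambda>t. \<Sum>y\<in>UNIV. mstep M t x y) \<longlonglongrightarrow> (\<Sum>y\<in>UNIV. d y)"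
    by (intro tendsto_sum lim)
  then have "(\<lambda>t. 1) \<longlonglongrightarrow> (\<Sum>y\<in>UNIV. d y)" by (simp add: mstep_sum[OF M])
  then show "(\<Sum>y\<in>UNIV. d y) = 1" by (rule LIMSEQ_unique[OF tendsto_const, symmetric])
  fix y
  have "(\<lambda>t. mstep M (Suc t) x y) \<longlonglongrightarrow> (\<Sum>z\<in>UNIV. d z * M z y)"
    unfolding mstep.simps by (intro tendsto_sum tendsto_mult_right lim)
  with LIMSEQ_Suc[OF lim] show "d y = (\<Sum>z\<in>UNIV. d z * M z y)" by (rule LIMSEQ_unique)
qed

lemma stationary_unique_if_mstep_tendsto:
  assumes d': "stationary M d'" and lim: "\<And>x y. (\<lambda>t. mstep M t x y) \<longlonglongrightarrow> d y"
  shows "d' = d"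
proof
  fix y
  have "(\<lambda>t. \<Sum>x\<in>UNIV. d' x * mstep M t x y) \<longlonglongrightarrow> (\<Sum>x\<in>UNIV. d' x * d y)"
    by (intro tendsto_sum tendsto_mult_left lim)
  moreover have "(\<Sum>x\<in>UNIV. d' x) = 1" using d' unfolding stationary_def by blast
  then have "(\<Sum>x\<in>UNIV. d' x * d y) = d y" by (simp flip: sum_distrib_right)
  ultimately have "(\<lambda>t. d' y) \<longlonglongrightarrow> d y"
    by (simp add: stationary_mstep[OF d'])
  then show "d' y = d y" by (rule LIMSEQ_unique[OF tendsto_const])
qed

lemma tendsto_if_geometric_bound:
  fixes a :: "nat \<Rightarrow> real"
  assumes "\<And>t. \<bar>a t - L\<bar> \<le> C * r ^ t" and "0 \<le> r" "r < 1"
  shows "a \<longlonglongrightarrow> L"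
proof -
  have "(\<lambda>t. C * r ^ t) \<longlonglongrightarrow> 0"
    using assms by (intro tendsto_mult_right_zero LIMSEQ_power_zero) auto
  then have "(\<lambda>t. a t - L) \<longlonglongrightarrow> 0"
    by (rule Lim_null_comparison[rotated]) (use assms(1) in auto)
  then show ?thesis by (simp add: LIM_zero_iff)
qed

lemma ergodic_theorem:
  assumes M: "stochastic M" and "irreducible M" and "aperiodic M"
  obtains d r where "0 \<le> r" "r < 1" "stationary M d" "\<And>d'. stationary M d' \<Longrightarrow> d' = d"
    "\<And>h. \<exists>C. \<forall>t x. \<bar>mat_vec (mstep M t) h x - (\<Sum>y\<in>UNIV. d y * h y)\<bar> \<le> C * r ^ t"
proof -
  obtain r L C where r: "0 \<le> r" "r < 1"
    and bound: "\<And>h t x. \<bar>mat_vec (mstep M t) h x - L h\<bar> \<le> C h * r ^ t"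
    using geometric_ergodicity assms by blast
  have lim: "(\<lambda>t. mat_vec (mstep M t) h x) \<longlonglongrightarrow> L h" for h x
    using bound r by (rule tendsto_if_geometric_bound)
  define d where "d y = L (\<lambda>z. if z = y then 1 else 0)" for y
  have mstep_lim: "(\<lambda>t. mstep M t x y) \<longlonglongrightarrow> d y" for x y
    using lim[of "\<lambda>z. if z = y then 1 else 0" x]
    by (simp add: d_def mat_vec_def if_distrib[of "(*) _"] cong: if_cong)
  have "(\<lambda>t. mat_vec (mstep M t) h x) \<longlonglongrightarrow> (\<Sum>y\<in>UNIV. d y * h y)" for h x
    unfolding mat_vec_def by (intro tendsto_sum tendsto_mult_right mstep_lim)
  then have "L h = (\<Sum>y\<in>UNIV. d y * h y)" for h
    using LIMSEQ_unique lim by blast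
  then have "\<exists>C. \<forall>t x. \<bar>mat_vec (mstep M t) h x - (\<Sum>y\<in>UNIV. d y * h y)\<bar> \<le> C * r ^ t" for h
    using bound by metis
  with r show ?thesis
    by (intro that[of r d] stationary_if_mstep_tendsto[OF M mstep_lim]
        stationary_unique_if_mstep_tendsto[OF _ mstep_lim])
qed

section \<open>The Poisson equation and the Bellman residual\<close>

lemma poisson_equation:
  assumes M: "stochastic M" and r: "0 \<le> r" "r < 1"
    and bound: "\<And>t x. \<bar>mat_vec (mstep M t) g x - c\<bar> \<le> C * r ^ t"
  defines "f \<equiv> \<lambda>x. \<Sum>t. mat_vec (mstep M t) g x - c"
  shows "mat_vec M f x = f x - (g x - c)"
proof -
  define a where "a t x = mat_vec (mstep M t) g x - c" for t x
  have summable: "summable (\<lambda>t. a t y)" for y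
  proof (rule summable_comparison_test)
    show "\<exists>N. \<forall>t\<ge>N. norm (a t y) \<le> C * r ^ t" using bound by (auto simp: a_def)
    show "summable (\<lambda>t. C * r ^ t)" using r by (intro summable_mult summable_geometric) simp
  qed
  have step: "mat_vec M (a t) x = a (Suc t) x" for t
  proof -
    have "mat_vec M (a t) x = mat_vec M (mat_vec (mstep M t) g) x - (\<Sum>y\<in>UNIV. M x y) * c"
      by (simp add: a_def mat_vec_def right_diff_distrib sum_subtractf sum_distrib_right)
    also have "\<dots> = a (Suc t) x"
      using M by (simp add: a_def mat_vec_mstep_Suc stochastic_def)
    finally show ?thesis .
  qed
  have f_eq: "f = (\<lambda>x. \<Sum>t. a t x)" by (simp add: f_def a_def)
  have "mat_vec M f x = (\<Sum>y\<in>UNIV. \<Sum>t. M x y * a t y)"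
    by (simp add: f_eq mat_vec_def suminf_mult[OF summable])
  also have "\<dots> = (\<Sum>t. mat_vec M (a t) x)"
    unfolding mat_vec_def by (rule suminf_sum[symmetric]) (intro summable_mult summable)
  also have "\<dots> = (\<Sum>t. a (Suc t) x)" by (simp only: step)
  also have "\<dots> = f x - a 0 x"
    unfolding f_eq by (rule suminf_split_head[OF summable])
  finally show ?thesis by (simp add: a_def mat_vec_mstep_0)
qed

lemma sum_UNIV_prod: "(\<Sum>y\<in>UNIV. f y) = (\<Sum>s\<in>UNIV. \<Sum>a\<in>UNIV. f (s, a))"
  by (simp add: sum.cartesian_product flip: UNIV_Times_UNIV)

lemma mat_vec_sa_trans:
  "mat_vec (sa_trans P pol) f x =
     (\<Sum>s'\<in>UNIV. P (fst x) (snd x) s' * (\<Sum>a'\<in>UNIV. pol s' a' * f (s', a')))"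
  by (simp add: mat_vec_def sa_trans_def sum_UNIV_prod sum_distrib_left mult.assoc)

lemma stochastic_sa_trans: "kernel P \<Longrightarrow> policy pol \<Longrightarrow> stochastic (sa_trans P pol)"
  using mat_vec_sa_trans[of P pol "\<lambda>_. 1"]
  by (simp add: stochastic_def kernel_def policy_def sa_trans_def mat_vec_def)

lemma standing_ergodic:
  assumes "kernel P" "policy pol" "standing P pol"
  obtains r where "0 \<le> r" "r < 1" "stationary (sa_trans P pol) (stat_dist P pol)"
    "\<And>h. \<exists>C. \<forall>t x. \<bar>mat_vec (mstep (sa_trans P pol) t) h x - avg_reward P pol h\<bar> \<le> C * r ^ t"
proof -
  have "irreducible (sa_trans P pol)" "aperiodic (sa_trans P pol)"
    using assms(3) by (simp_all add: standing_def)
  then obtain r d where r: "0 \<le> r" "r < 1" and d: "stationary (sa_trans P pol) d"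
    and unique: "\<And>d'. stationary (sa_trans P pol) d' \<Longrightarrow> d' = d"
    and bound: "\<And>h. \<exists>C. \<forall>t x. \<bar>mat_vec (mstep (sa_trans P pol) t) h x - (\<Sum>y\<in>UNIV. d y * h y)\<bar> \<le> C * r ^ t"
    by (rule ergodic_theorem[OF stochastic_sa_trans[OF assms(1,2)]]) blast
  have "stat_dist P pol = d"
    unfolding stat_dist_def stationary_def[symmetric] using d unique by (rule the_equality)
  with r d bound show ?thesis
    by (intro that) (simp_all add: avg_reward_def expect_def)
qed

lemma diff_Q_poisson:
  assumes "kernel P" "policy pol" "standing P pol"
  shows "mat_vec (sa_trans P pol) (diff_Q P pol g) x = diff_Q P pol g x - (g x - avg_reward P pol g)"
proof -
  obtain r where r: "0 \<le> r" "r < 1" and bounds: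
    "\<And>h. \<exists>C. \<forall>t x. \<bar>mat_vec (mstep (sa_trans P pol) t) h x - avg_reward P pol h\<bar> \<le> C * r ^ t"
    by (rule standing_ergodic[OF assms]) blast
  obtain C where bound:
    "\<And>t x. \<bar>mat_vec (mstep (sa_trans P pol) t) g x - avg_reward P pol g\<bar> \<le> C * r ^ t"
    using bounds[of g] by blast
  have "diff_Q P pol g =
      (\<lambda>x. \<Sum>t. mat_vec (mstep (sa_trans P pol) t) g x - avg_reward P pol g)"
    unfolding diff_Q_def mat_vec_def ..
  then show ?thesis
    using poisson_equation[OF stochastic_sa_trans[OF assms(1,2)] r bound] by simp
qed

lemma bellman_residual_diff_Q:
  assumes "kernel P" "policy pol" "standing P pol" and mu: "(\<Sum>x\<in>UNIV. mu x) = 1"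
  shows "expect mu (diff_Q P pol g) -
      (\<Sum>x\<in>UNIV. mu x * (\<Sum>s'\<in>UNIV. P (fst x) (snd x) s' * (\<Sum>a'\<in>UNIV. pol s' a' * diff_Q P pol g (s', a'))))
    = expect mu g - expect (stat_dist P pol) g"
proof -
  have "expect mu (diff_Q P pol g) - (\<Sum>x\<in>UNIV. mu x * mat_vec (sa_trans P pol) (diff_Q P pol g) x)
      = (\<Sum>x\<in>UNIV. mu x * (g x - avg_reward P pol g))"
    by (simp add: expect_def diff_Q_poisson[OF assms(1-3)] algebra_simps flip: sum_subtractf)
  also have "\<dots> = expect mu g - avg_reward P pol g"
    using mu by (simp add: expect_def right_diff_distrib sum_subtractf flip: sum_distrib_right)
  finally show ?thesis by (simp add: mat_vec_sa_trans avg_reward_def)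
qed

theorem theorem3p1:
  fixes Pstar Phat :: "'s::finite \<Rightarrow> 'a::finite \<Rightarrow> 's \<Rightarrow> real"
    and polb pol :: "'s \<Rightarrow> 'a \<Rightarrow> real"
    and G :: "('s \<times> 'a \<Rightarrow> real) set"
  assumes "kernel Pstar" and "kernel Phat"
    and "policy polb" and "policy pol"
    and "standing Pstar polb" and "standing Phat pol"
    and "\<exists>B. \<forall>g\<in>G. \<forall>x. \<bar>g x\<bar> \<le> B"
  shows "IPM G (stat_dist Pstar polb) (stat_dist Phat pol)
       = bellman_R ((\<lambda>g. diff_Q Phat pol g) ` G) (stat_dist Pstar polb) pol Phat"
  \<comment> \<open>the identity holds for each g separately\<close>
proof -
  obtain r where "stationary (sa_trans Pstar polb) (stat_dist Pstar polb)"
    using standing_ergodic[OF assms(1,3,5)] .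
  then have "(\<Sum>x\<in>UNIV. stat_dist Pstar polb x) = 1" by (simp add: stationary_def)
  then show ?thesis
    unfolding IPM_def bellman_R_def image_image
    by (simp add: bellman_residual_diff_Q[OF assms(2,4,6)])
qed

end
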